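(* Let $S_{\text{thirds}}=(1,\mathbb{R}^{+},\{-\tfrac13,0,\tfrac13\},f_{\text{add}},\{\bot\}\cup\mathbb{Z}^{+},h_{\text{sqz}},x_0=0)$ and $\widehat{S}_{\text{binary}}=(1,\mathbb{R}^{+},\{\pm\tfrac{1}{2^p}\mid p\in\mathbb{Z}\},f_{\text{add}},\{\bot\}\cup\mathbb{Z}^{+},h_{\text{sqz}},\widehat{x}_0=0)$, where $f_{\text{add}}(x,u)=x+u$ and $$h_{\text{sqz}}(x)=\begin{cases} q & \text{if there is } q\in\mathbb{Z}^{+} \text{ with } -\frac{1}{4\cdot 2^q}\le x-\frac{q}{3}\le\frac{1}{4\cdot 2^q},\\ \bot & \text{otherwise.}\end{cases}$$ For any $1$-illusion of $S_{\text{thirds}}$ by $\widehat{S}_{\text{binary}}$, with witness time-scaling function $z$, and any finite $T$, when the robot in $S_{\text{thirds}}$ follows the constant policy $u_k=\tfrac13$, there exists $N_T>0$ such that $$T<\max_{k\in\{1,\dots,N_T\}}\{z(k+1)-z(k)\}.$$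
   Context: A deterministic multi-robot transition system is a 7-tuple $(n,X,U,f,Y,h,x_0)$: $n$ robots, product state space $X$, product action space $U$, transition function $f:X\times U\to X$ (componentwise per robot), product observation space $Y$, observation function $h:X\to Y$ (componentwise per robot, $h^{(i)}$), initial state $x_0$; it evolves by $x_{k+1}=f(x_k,u_k)$, $y_k=h(x_k)$. Here both systems have a single robot. When a primary system $\widehat{S}$ (hatted quantities) emulates a secondary system $S$, a robot policy $\widehat{\pi}^{(i)}$ for robot $i$ of $\widehat{S}$ maps its own action history $\widehat{u}^{(i)}_0,\dots,\widehat{u}^{(i)}_k$, its observation history $\widehat{y}^{(i)}_0,\dots,\widehat{y}^{(i)}_k$, and the state history $x_0,\dots,x_\ell$ of the secondary system (with $\ell$ possibly different from $k$) to an action $\widehat{u}^{(i)}_k$. Robot policies in $S$ choose actions from histories in the same manner. $\widehat{S}$ is an $m$-illusion of $S$ (with $0<m\le n$) if there exist (i) robot policies $\widehat{\pi}^{(1)},\dots,\widehat{\pi}^{(\widehat{n})}$ in $\widehat{S}$, (ii) a strictly increasing function $z:\mathbb{Z}^+\to\mathbb{Z}^+$, and (iii) functions $\rho_k:\{1,\dots,m\}\to\{1,\dots,\widehat{n}\}$, such that for any robot policies $\pi^{(1)},\dots,\pi^{(n)}$ in $S$, for all $k\ge0$ and $1\le i\le m$, $h^{(i)}(x_k)=\widehat{h}^{(\rho_k(i))}(\widehat{x}_{z(k)})$, where $x$ and $\widehat{x}$ are the state trajectories of $S$ and $\widehat{S}$. A tuple $(\widehat{\pi},(\rho_k),z)$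 satisfying this is a witness to the illusion. *)

theory Defs
  imports Complex_Main
begin

text \<open>Observations: None stands for bottom, Some q for q in Z+ (= nonnegative integers).\<close>
type_synonym obs = "nat option"

definition sqz_ok :: "real \<Rightarrow> nat \<Rightarrow> bool" where
  "sqz_ok x q \<longleftrightarrow> - (1 / (4 * 2 ^ q)) \<le> x - real q / 3 \<and> x - real q / 3 \<le> 1 / (4 * 2 ^ q)"

text \<open>h_sqz; where the defining intervals overlap, the least such q is returned.\<close>
definition h_sqz :: "real \<Rightarrow> obs" where
  "h_sqz x = (if \<exists>q. sqz_ok x q then Some (LEAST q. sqz_ok x q) else None)"

definition f_add :: "real \<Rightarrow> real \<Rightarrow> real" where
  "f_add x u = x + u"

definition U_thirds :: "real set" where
  "U_thirds = {- 1/3, 0, 1/3}"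

definition U_binary :: "real set" where
  "U_binary = {u. \<exists>p::int. u = 1 / 2 powr (real_of_int p) \<or> u = - (1 / 2 powr (real_of_int p))}"

text \<open>A policy of the (single) robot of S_thirds: own action history u_0..u_{k-1} and
  observation history y_0..y_k give u_k.\<close>
type_synonym policy = "real list \<Rightarrow> obs list \<Rightarrow> real"

definition valid_policy :: "policy \<Rightarrow> bool" where
  "valid_policy \<pi> \<longleftrightarrow> (\<forall>us ys. \<pi> us ys \<in> U_thirds)"

definition run_thirds :: "policy \<Rightarrow> (nat \<Rightarrow> real) \<Rightarrow> (nat \<Rightarrow> real) \<Rightarrow> bool" where
  "run_thirds \<pi> x u \<longleftrightarrow> x 0 = 0 \<and>
     (\<forall>k. u k = \<pi> (map u [0..<k]) (map (h_sqz \<circ> x) [0..<Suc k]) \<and> x (Suc k) = f_add (x k) (u k))"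

text \<open>A policy of the (single) robot of the primary system: own action history, own observation
  history, and the state history x_0..x_l of the secondary system.\<close>
type_synonym hpolicy = "real list \<Rightarrow> obs list \<Rightarrow> real list \<Rightarrow> real"

definition valid_hpolicy :: "hpolicy \<Rightarrow> bool" where
  "valid_hpolicy \<pi> \<longleftrightarrow> (\<forall>us ys xs. \<pi> us ys xs \<in> U_binary)"

text \<open>The index l (how much of the secondary state history is visible at primary step j) is
  given by an arbitrary function ell.\<close>
definition run_binary ::
  "(nat \<Rightarrow> nat) \<Rightarrow> hpolicy \<Rightarrow> (nat \<Rightarrow> real) \<Rightarrow> (nat \<Rightarrow> real) \<Rightarrow> (nat \<Rightarrow> real) \<Rightarrow> bool" where
  "run_binary ell \<pi>h x xh uh \<longleftrightarrow> xh 0 = 0 \<and>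
     (\<forall>j. uh j = \<pi>h (map uh [0..<j]) (map (h_sqz \<circ> xh) [0..<Suc j]) (map x [0..<Suc (ell j)])
          \<and> xh (Suc j) = f_add (xh j) (uh j))"

text \<open>Witness of a 1-illusion of S_thirds by S_binary (with one robot each, rho_k is forced to be
  the identity on {1}).\<close>
definition illusion_witness :: "(nat \<Rightarrow> nat) \<Rightarrow> hpolicy \<Rightarrow> (nat \<Rightarrow> nat) \<Rightarrow> bool" where
  "illusion_witness ell \<pi>h z \<longleftrightarrow> valid_hpolicy \<pi>h \<and> strict_mono z \<and>
     (\<forall>\<pi> x u xh uh. valid_policy \<pi> \<longrightarrow> run_thirds \<pi> x u \<longrightarrow> run_binary ell \<pi>h x xh uh \<longrightarrow>
        (\<forall>k. h_sqz (x k) = h_sqz (xh (z k))))"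

end

theory Submission
  imports Defs
begin

text \<open>
  Feed the constant policy 1/3 to the secondary system, so that x_k = k/3. The observations
  force the emulating state at time z(k) to lie within 2^-k/4 of k/3, hence the displacement
  accumulated between z(k) and z(k+1) lies within 2^-k of 1/3. But a sum of at most n steps
  of the form +-2^p stays a fixed distance away from 1/3: induct on n; either some step is tiny
  and can be dropped, or all steps are multiples of a common 2^-N, and then so is the sum,
  whereas 1/3 is not a dyadic rational. So the gaps z(k+1) - z(k) cannot stay bounded.
\<close>

lemma not_three_dvd_power_two: "\<not> (3::int) dvd 2 ^ N"
proof
  assume "(3::int) dvd 2 ^ N"
  then have "coprime (3::int) (2 ^ N) \<longleftrightarrow> is_unit (3::int)" by (rule coprime_absorb_left)
  then show False by simp
qed

lemma third_not_dyadic: "(1/3 :: real) * 2 ^ N \<notin> \<int>"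
proof
  assume "(1/3 :: real) * 2 ^ N \<in> \<int>"
  then obtain m where "(1/3 :: real) * 2 ^ N = of_int m" by (auto elim: Ints_cases)
  then have "of_int (2 ^ N) = (of_int (3 * m) :: real)" by simp
  then have "(2::int) ^ N = 3 * m" by (simp only: of_int_eq_iff)
  then show False using not_three_dvd_power_two by (metis dvd_triv_left)
qed

lemma Ints_bounded_away_from_nonint:
  fixes y :: real
  assumes "y \<notin> \<int>"
  shows "\<exists>\<epsilon>>0. \<forall>m\<in>\<int>. \<epsilon> \<le> \<bar>m - y\<bar>"
proof (intro exI conjI ballI)
  show "min (frac y) (1 - frac y) > 0" using assms frac_lt_1[of y] by simp
next
  fix m :: real assume "m \<in> \<int>"
  then obtain k where m: "m = of_int k" by (auto elim: Ints_cases)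
  have "k \<le> \<lfloor>y\<rfloor> \<or> \<lfloor>y\<rfloor> + 1 \<le> k" by linarith
  then have "m \<le> of_int \<lfloor>y\<rfloor> \<or> of_int \<lfloor>y\<rfloor> + 1 \<le> m"
    unfolding m by (metis of_int_1 of_int_add of_int_le_iff)
  then show "min (frac y) (1 - frac y) \<le> \<bar>m - y\<bar>" unfolding frac_def by linarith
qed

lemma U_binary_scaled_Ints:
  assumes "u \<in> U_binary" and "1 / 2 ^ N \<le> \<bar>u\<bar>"
  shows "u * 2 ^ N \<in> \<int>"
proof -
  from assms(1) obtain p :: int where p: "u = 2 powr (- p) \<or> u = - (2 powr (- p))"
    unfolding U_binary_def by (auto simp: powr_minus_divide)
  then have "\<bar>u\<bar> = 2 powr (- p)" by auto
  moreover have "1 / 2 ^ N = (2::real) powr (- real N)"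
    by (simp add: powr_minus_divide powr_realpow)
  ultimately have "p \<le> int N" using assms(2) by simp
  have "2 powr (- p) * 2 ^ N = 2 powr (real_of_int (- p)) * 2 powr (real N)"
    by (simp add: powr_realpow)
  also have "\<dots> = 2 powr (real_of_int (int N - p))" by (simp add: powr_add [symmetric])
  also have "\<dots> = 2 powr real (nat (int N - p))" using \<open>p \<le> int N\<close> by simp
  also have "\<dots> = 2 ^ nat (int N - p)" by (rule powr_realpow) simp
  finally have "2 powr (- p) * 2 ^ N \<in> \<int>" by simp
  with p show ?thesis by auto
qed

lemma dyadic_sums_far_from_nondyadic:
  fixes c :: real
  assumes nondyadic: "\<And>N::nat. c * 2 ^ N \<notin> \<int>"
  shows "\<exists>\<delta>>0. \<forall>(A::'a set) u. finite A \<longrightarrow> card A \<le> n \<longrightarrow> (\<forall>i\<in>A. u i \<in> U_binary) \<longrightarrow>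
           \<delta> \<le> \<bar>sum u A - c\<bar>"
proof (induction n)
  case 0
  have "c \<noteq> 0" using nondyadic[of 0] by auto
  then show ?case by (intro exI[of _ "\<bar>c\<bar>"]) auto
next
  case (Suc n)
  then obtain d where "d > 0" and far_n: "\<And>(A::'a set) u. finite A \<Longrightarrow> card A \<le> n \<Longrightarrow>
      \<forall>i\<in>A. u i \<in> U_binary \<Longrightarrow> d \<le> \<bar>sum u A - c\<bar>" by blast
  obtain N :: nat where "2 / d < 2 ^ N" using real_arch_pow[of 2 "2/d"] by auto
  then have small: "1 / 2 ^ N < d / 2" using \<open>d > 0\<close> by (simp add: field_simps)
  obtain \<epsilon> where "\<epsilon> > 0" and \<epsilon>: "\<And>m. m \<in> \<int> \<Longrightarrow> \<epsilon> \<le> \<bar>m - c * 2 ^ N\<bar>"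
    using Ints_bounded_away_from_nonint[OF nondyadic[of N]] by blast
  define \<delta> where "\<delta> = min (d / 2) (\<epsilon> / 2 ^ N)"
  have "\<delta> \<le> \<bar>sum u A - c\<bar>"
    if A: "finite A" "card A \<le> Suc n" "\<forall>i\<in>A. u i \<in> U_binary" for A :: "'a set" and u
  proof (cases "\<exists>i\<in>A. \<bar>u i\<bar> < d / 2")
    case True
    then obtain i where "i \<in> A" "\<bar>u i\<bar> < d / 2" by blast
    have "sum u A = u i + sum u (A - {i})" using A(1) \<open>i \<in> A\<close> by (simp add: sum.remove)
    moreover have "d \<le> \<bar>sum u (A - {i}) - c\<bar>" using far_n[of "A - {i}" u] A \<open>i \<in> A\<close> by auto
    ultimately show ?thesis using \<open>\<bar>u i\<bar> < d / 2\<close> unfolding \<delta>_def by linarith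
  next
    case False
    \<comment> \<open>all steps are then at least 2^-N, hence multiples of 2^-N\<close>
    then have "u i * 2 ^ N \<in> \<int>" if "i \<in> A" for i
      using U_binary_scaled_Ints A(3) small that by force
    then have "sum u A * 2 ^ N \<in> \<int>" by (simp add: sum_distrib_right Ints_sum)
    then have "\<epsilon> \<le> \<bar>sum u A * 2 ^ N - c * 2 ^ N\<bar>" by (rule \<epsilon>)
    also have "\<dots> = \<bar>sum u A - c\<bar> * 2 ^ N" by (simp add: abs_mult flip: left_diff_distrib)
    finally have "\<epsilon> \<le> \<bar>sum u A - c\<bar> * 2 ^ N" .
    then have "\<epsilon> / 2 ^ N \<le> \<bar>sum u A - c\<bar>" by (simp add: divide_le_eq)
    then show ?thesis unfolding \<delta>_def by linarith
  qed
  moreover have "\<delta> > 0" using \<open>d > 0\<close> \<open>\<epsilon> > 0\<close> unfolding \<delta>_def by simp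
  ultimately show ?case by blast
qed

lemma h_sqz_third: "h_sqz (real k / 3) = Some k"
proof -
  have ok: "sqz_ok (real k / 3) k" unfolding sqz_ok_def by simp
  have not_ok: "\<not> sqz_ok (real k / 3) q" if "q \<noteq> k" for q
  proof
    assume "sqz_ok (real k / 3) q"
    then have "\<bar>real k - real q\<bar> / 3 \<le> 1 / (4 * 2 ^ q)" unfolding sqz_ok_def by auto
    also have "\<dots> \<le> 1 / 4" by (simp add: field_simps)
    finally have "\<bar>real k - real q\<bar> \<le> 3 / 4" by simp
    with that show False by linarith
  qed
  have "(LEAST q. sqz_ok (real k / 3) q) = k"
    by (rule Least_equality) (use ok not_ok in \<open>force+\<close>)
  with ok show ?thesis unfolding h_sqz_def by auto
qed

lemma sqz_ok_if_h_sqz_Some: "h_sqz x = Some q \<Longrightarrow> sqz_ok x q"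
  unfolding h_sqz_def by (auto split: if_splits intro: LeastI_ex)

lemma run_thirds_constant_third: "run_thirds (\<lambda>_ _. 1/3) (\<lambda>k. real k / 3) (\<lambda>_. 1/3)"
  unfolding run_thirds_def f_add_def by (simp add: field_simps)

lemma valid_policy_constant_third: "valid_policy (\<lambda>_ _. 1/3)"
  unfolding valid_policy_def U_thirds_def by simp

fun binary_state :: "(nat \<Rightarrow> nat) \<Rightarrow> hpolicy \<Rightarrow> (nat \<Rightarrow> real) \<Rightarrow> nat \<Rightarrow> real" where
  "binary_state ell \<pi>h x 0 = 0"
| "binary_state ell \<pi>h x (Suc j) = binary_state ell \<pi>h x j +
     \<pi>h (map (\<lambda>i. binary_state ell \<pi>h x (Suc i) - binary_state ell \<pi>h x i) [0..<j])
        (map (h_sqz \<circ> binary_state ell \<pi>h x) [0..<Suc j]) (map x [0..<Suc (ell j)])"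

lemma run_binary_exists: "\<exists>xh uh. run_binary ell \<pi>h x xh uh"
proof (intro exI)
  let ?xh = "binary_state ell \<pi>h x"
  let ?uh = "\<lambda>j. ?xh (Suc j) - ?xh j"
  \<comment> \<open>linear arithmetic only: simplification would unfold the recursion under the maps forever\<close>
  have step: "?uh j = \<pi>h (map ?uh [0..<j]) (map (h_sqz \<circ> ?xh) [0..<Suc j]) (map x [0..<Suc (ell j)])"
    for j using binary_state.simps(2)[of ell \<pi>h x j] by linarith
  show "run_binary ell \<pi>h x ?xh ?uh"
    unfolding run_binary_def f_add_def
  proof (intro conjI allI)
    fix j
    show "?uh j = \<pi>h (map ?uh [0..<j]) (map (h_sqz \<circ> ?xh) [0..<Suc j]) (map x [0..<Suc (ell j)])"
      by (rule step)
    show "?xh (Suc j) = ?xh j + ?uh j" by linarith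
  qed (rule binary_state.simps(1))
qed

lemma run_binary_step_mem:
  assumes "run_binary ell \<pi>h x xh uh" and "valid_hpolicy \<pi>h"
  shows "uh j \<in> U_binary"
proof -
  from assms(1) have "uh j = \<pi>h (map uh [0..<j]) (map (h_sqz \<circ> xh) [0..<Suc j]) (map x [0..<Suc (ell j)])"
    unfolding run_binary_def by blast
  with assms(2) show ?thesis unfolding valid_hpolicy_def by simp
qed

lemma run_binary_displacement:
  assumes "run_binary ell \<pi>h x xh uh" and "a \<le> b"
  shows "xh b - xh a = sum uh {a..<b}"
proof -
  have "uh j = xh (Suc j) - xh j" for j using assms(1) unfolding run_binary_def f_add_def by simp
  then show ?thesis using sum_Suc_diff'[OF assms(2), of xh] by simp
qed

lemma illusion_steps_near_third:
  assumes "illusion_witness ell \<pi>h z"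
  obtains uh where "\<And>j. uh j \<in> U_binary"
    and "\<And>k. \<bar>sum uh {z k..<z (Suc k)} - 1/3\<bar> \<le> 1 / 2 ^ k"
proof -
  obtain xh uh where run: "run_binary ell \<pi>h (\<lambda>k. real k / 3) xh uh"
    using run_binary_exists by blast
  have "strict_mono z" and "valid_hpolicy \<pi>h"
    using assms unfolding illusion_witness_def by auto
  have "\<forall>k. h_sqz (real k / 3) = h_sqz (xh (z k))"
    using assms valid_policy_constant_third run_thirds_constant_third run
    unfolding illusion_witness_def by blast
  then have ok: "sqz_ok (xh (z k)) k" for k by (metis h_sqz_third sqz_ok_if_h_sqz_Some)
  have near: "\<bar>xh (z k) - real k / 3\<bar> \<le> 1 / (4 * 2 ^ k)" for k
    using ok[of k] unfolding sqz_ok_def abs_le_iff by linarith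
  have "\<bar>sum uh {z k..<z (Suc k)} - 1/3\<bar> \<le> 1 / 2 ^ k" for k
  proof -
    have "z k \<le> z (Suc k)" using \<open>strict_mono z\<close> by (simp add: strict_mono_less_eq)
    then have "sum uh {z k..<z (Suc k)} - 1/3 = (xh (z (Suc k)) - real (Suc k) / 3) - (xh (z k) - real k / 3)"
      using run_binary_displacement[OF run] by (simp add: field_simps)
    also have "\<bar>\<dots>\<bar> \<le> 1 / (4 * 2 ^ Suc k) + 1 / (4 * 2 ^ k)"
      using near[of k] near[of "Suc k"] by (simp add: abs_le_iff)
    also have "\<dots> \<le> 1 / 2 ^ k" by (simp add: field_simps)
    finally show ?thesis .
  qed
  with run_binary_step_mem[OF run \<open>valid_hpolicy \<pi>h\<close>] show ?thesis by (rule that)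
qed

lemma illusion_gaps_unbounded:
  assumes "illusion_witness ell \<pi>h z"
  shows "\<exists>k\<ge>1. T < real (z (Suc k)) - real (z k)"
proof (rule ccontr)
  assume bounded: "\<not> ?thesis"
  have gap: "z (Suc k) - z k \<le> nat \<lceil>T\<rceil>" if "k \<ge> 1" for k
  proof -
    have "real (z (Suc k)) - real (z k) \<le> T" using bounded that by force
    then show ?thesis by linarith
  qed
  obtain uh where steps: "\<And>j. uh j \<in> U_binary"
    and near: "\<And>k. \<bar>sum uh {z k..<z (Suc k)} - 1/3\<bar> \<le> 1 / 2 ^ k"
    using illusion_steps_near_third[OF assms] by blast
  obtain \<delta> where "\<delta> > 0" and far: "\<forall>(A :: nat set) u. finite A \<longrightarrow> card A \<le> nat \<lceil>T\<rceil> \<longrightarrow>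
      (\<forall>i\<in>A. u i \<in> U_binary) \<longrightarrow> \<delta> \<le> \<bar>sum u A - 1/3\<bar>"
    using dyadic_sums_far_from_nondyadic[OF third_not_dyadic] by blast
  obtain K where "1 / \<delta> < 2 ^ K" using real_arch_pow[of 2 "1 / \<delta>"] by auto
  then have "1 / 2 ^ Suc K < \<delta>" using \<open>\<delta> > 0\<close> by (simp add: field_simps)
  moreover have "card {z (Suc K)..<z (Suc (Suc K))} \<le> nat \<lceil>T\<rceil>" using gap[of "Suc K"] by simp
  then have "\<delta> \<le> \<bar>sum uh {z (Suc K)..<z (Suc (Suc K))} - 1/3\<bar>"
    using far steps by blast
  ultimately show False using near[of "Suc K"] by linarith
qed

theorem lemma2:
  fixes ell :: "nat \<Rightarrow> nat" and \<pi>h :: hpolicy and z :: "nat \<Rightarrow> nat" and T :: real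
  assumes "illusion_witness ell \<pi>h z"
  shows "\<exists>N::nat. N > 0 \<and> T < Max ((\<lambda>k. real (z (Suc k)) - real (z k)) ` {1..N})"
proof -
  obtain k where "k \<ge> 1" and "T < real (z (Suc k)) - real (z k)"
    using illusion_gaps_unbounded[OF assms] by blast
  moreover have "real (z (Suc k)) - real (z k) \<le> Max ((\<lambda>k. real (z (Suc k)) - real (z k)) ` {1..k})"
    using \<open>k \<ge> 1\<close> by (intro Max_ge) auto
  ultimately have "T < Max ((\<lambda>k. real (z (Suc k)) - real (z k)) ` {1..k})" by linarith
  with \<open>k \<ge> 1\<close> show ?thesis by (intro exI[of _ k]) simp
qed

end
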